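(* Let $N\ge1$ be an integer and $0<y<1$. Define $\eta\in\mathbb{R}$ by $-\tfrac12\eta^2=\ln[4y(1-y)]$ with $\operatorname{sign}(\eta)=\operatorname{sign}(\tfrac12-y)$ (and $\eta=0$ if $y=\tfrac12$). Then $$I_{1-y}(N,N)=\sqrt{\frac{N}{2\pi}}\;\Phi(N)\int_{-\infty}^{\eta}e^{-\frac12 N\zeta^2}\,\phi(\zeta)\,d\zeta,$$ where $$\Phi(N)=\frac{1}{\sqrt N}\,\frac{\Gamma(N+\tfrac12)}{\Gamma(N)},\qquad \phi(\zeta)=\sqrt{\frac{\tfrac12\zeta^2}{1-\exp(-\tfrac12\zeta^2)}}\ \ (\phi(0)=1),$$ the square root being positive.
   Context: $I_x(a,b)=\frac{1}{B(a,b)}\int_0^x t^{a-1}(1-t)^{b-1}dt$ is the regularized incomplete beta function, $B(a,b)=\Gamma(a)\Gamma(b)/\Gamma(a+b)$. *)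

theory Defs
  imports "HOL-Analysis.Analysis"
begin

definition inc_beta_reg :: "real \<Rightarrow> real \<Rightarrow> real \<Rightarrow> real" where
  "inc_beta_reg x a b =
     (1 / Beta a b) * (LBINT t=0..x. t powr (a - 1) * (1 - t) powr (b - 1))"

definition phiB :: "real \<Rightarrow> real" where
  "phiB z = (if z = 0 then 1 else sqrt ((z^2 / 2) / (1 - exp (- (z^2 / 2)))))"

definition PhiB :: "nat \<Rightarrow> real" where
  "PhiB N = (1 / sqrt (real N)) * (Gamma (real N + 1/2) / Gamma (real N))"

definition etaB :: "real \<Rightarrow> real" where
  "etaB y = sgn (1/2 - y) * sqrt (- 2 * ln (4 * y * (1 - y)))"

end

theory Submission
  imports Defs "HOL-Real_Asymp.Real_Asymp"
begin

(*
  The substitution -zeta^2/2 = ln (4 t (1 - t)), sgn zeta = sgn (t - 1/2), i.e. t = t_of_zeta zeta,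
  maps the real line increasingly onto (0, 1) and sends eta to 1 - y. It transforms
  (t (1 - t))^(N - 1) dt into 4^(-N) sqrt 2 exp (-N zeta^2 / 2) phi(zeta) d zeta, so the Beta
  integral up to 1 - y is 4^(-N) sqrt 2 times the zeta-integral up to eta. Legendre's duplication
  formula identifies the remaining constant 4^N / (sqrt 2 B(N, N)) with sqrt (N / (2 pi)) Phi(N).
*)

lemma Gamma_legendre_duplication_real:
  fixes x :: real
  assumes "x > 0"
  shows "Gamma x * Gamma (x + 1/2) = 2 powr (1 - 2 * x) * sqrt pi * Gamma (2 * x)"
proof -
  have "x \<notin> \<int>\<^sub>\<le>\<^sub>0" "x + 1/2 \<notin> \<int>\<^sub>\<le>\<^sub>0"
    using assms by auto
  then have "complex_of_real x \<notin> \<int>\<^sub>\<le>\<^sub>0" "complex_of_real x + 1/2 \<notin> \<int>\<^sub>\<le>\<^sub>0"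
    using of_real_in_nonpos_Ints_iff[of "x + 1/2", where 'a=complex]
    by (simp_all add: of_real_in_nonpos_Ints_iff)
  then have "Gamma (complex_of_real x) * Gamma (complex_of_real x + 1/2) =
      exp ((1 - 2 * complex_of_real x) * of_real (ln 2)) * of_real (sqrt pi) * Gamma (2 * complex_of_real x)"
    by (intro Gamma_legendre_duplication) simp_all
  also have "\<dots> = complex_of_real (exp ((1 - 2 * x) * ln 2) * sqrt pi * Gamma (2 * x))"
    by (simp add: Gamma_complex_of_real[symmetric] exp_of_real[symmetric])
  finally have "complex_of_real (Gamma x * Gamma (x + 1/2)) =
      complex_of_real (exp ((1 - 2 * x) * ln 2) * sqrt pi * Gamma (2 * x))"
    by (simp add: Gamma_complex_of_real[symmetric])
  then show ?thesis
    by (simp only: of_real_eq_iff) (simp add: powr_def mult.commute)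
qed

lemma inverse_Beta_diag:
  fixes x :: real
  assumes "x > 0"
  shows "1 / Beta x x = 4 powr x * Gamma (x + 1/2) / (2 * sqrt pi * Gamma x)"
proof -
  have powers: "4 powr x * 2 powr (1 - 2 * x) = (2 :: real)"
  proof -
    have "(4 :: real) powr x = 2 powr (2 * x)"
      using powr_powr[of 2 2 x] by simp
    then show ?thesis
      by (simp add: powr_add[symmetric])
  qed
  have "4 powr x * Gamma x * Gamma (x + 1/2) = 4 powr x * (2 powr (1 - 2 * x) * sqrt pi * Gamma (2 * x))"
    by (simp only: mult.assoc Gamma_legendre_duplication_real[OF assms])
  also have "\<dots> = 2 * sqrt pi * Gamma (2 * x)"
    by (simp only: mult.assoc[symmetric] powers)
  finally have "4 powr x * Gamma x * Gamma (x + 1/2) = 2 * sqrt pi * Gamma (2 * x)" .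
  moreover have "Gamma x > 0"
    using assms by simp
  ultimately show ?thesis
    by (simp add: Beta_def field_simps)
qed

lemma inc_beta_reg_of_nat:
  fixes m n :: nat
  assumes "m \<ge> 1" "n \<ge> 1" "0 \<le> x" "x \<le> 1"
  shows "inc_beta_reg x m n = (LBINT t=0..x. t ^ (m - 1) * (1 - t) ^ (n - 1)) / Beta m n"
proof -
  have "(LBINT t=0..x. t powr (real m - 1) * (1 - t) powr (real n - 1)) =
        (LBINT t=0..x. t ^ (m - 1) * (1 - t) ^ (n - 1))"
  proof (rule interval_integral_cong)
    fix t assume "t \<in> einterval (min 0 (ereal x)) (max 0 (ereal x))"
    then have "0 < t" "t < 1"
      using assms by (auto simp: einterval_iff min_def max_def split: if_splits)
    then show "t powr (real m - 1) * (1 - t) powr (real n - 1) = t ^ (m - 1) * (1 - t) ^ (n - 1)"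
      using assms by (simp add: powr_realpow[symmetric])
  qed
  then show ?thesis
    by (simp add: inc_beta_reg_def)
qed

lemma interval_integral_has_real_derivative:
  fixes f :: "real \<Rightarrow> real" and c x :: real
  assumes "continuous_on UNIV f"
  shows "((\<lambda>u. LBINT t=c..u. f t) has_real_derivative f x) (at x)"
proof -
  define a b where "a = min c x - 1" and "b = max c x + 1"
  have "((\<lambda>u. LBINT t=c..u. f t) has_vector_derivative f x) (at x within {a..b})"
    by (rule interval_integral_FTC2)
       (use assms in \<open>auto simp: a_def b_def intro: continuous_on_subset\<close>)
  moreover have "at x within {a..b} = at x"
    by (rule at_within_interior) (auto simp: a_def b_def)
  ultimately show ?thesis
    by (simp add: has_real_derivative_iff_has_vector_derivative)
qed

lemma set_integral_atMost_FTC: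
  fixes f F :: "real \<Rightarrow> real" and c L u :: real
  assumes F_cont: "\<And>x. isCont F x" and F_lim: "(F \<longlongrightarrow> L) at_bot"
    and F_deriv: "\<And>x. x \<noteq> c \<Longrightarrow> (F has_real_derivative f x) (at x)"
    and f_cont: "\<And>x. x \<noteq> c \<Longrightarrow> isCont f x"
    and f_nonneg: "\<And>x. 0 \<le> f x"
  shows "(LBINT x:{..u}. f x) = F u - L"
proof -
  have F_left: "((F \<circ> real_of_ereal) \<longlongrightarrow> F b) (at_left (ereal b))" for b
    using F_cont[of b] by (simp add: ereal_tendsto_simps1 isCont_def filterlim_at_split)
  have F_right: "((F \<circ> real_of_ereal) \<longlongrightarrow> F a) (at_right (ereal a))" for a
    using F_cont[of a] by (simp add: ereal_tendsto_simps1 isCont_def filterlim_at_split)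
  have F_bot: "((F \<circ> real_of_ereal) \<longlongrightarrow> L) (at_right (-\<infinity>))"
    using F_lim by (simp add: ereal_tendsto_simps1)
  have f_AE_nonneg: "AE x in lborel. a < ereal x \<longrightarrow> ereal x < b \<longrightarrow> 0 \<le> f x" for a b
    by (simp add: f_nonneg)
  have below_c: "set_integrable lborel {..<b} f" "(LBINT x:{..<b}. f x) = F b - L"
    if "b \<le> c" for b
  proof -
    have "\<And>x. - \<infinity> < ereal x \<Longrightarrow> ereal x < ereal b \<Longrightarrow> (F has_real_derivative f x) (at x)"
         "\<And>x. - \<infinity> < ereal x \<Longrightarrow> ereal x < ereal b \<Longrightarrow> isCont f x"
      using that by (auto intro!: F_deriv f_cont)
    from interval_integral_FTC_nonneg[OF _ this f_AE_nonneg F_bot F_left]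
    show "set_integrable lborel {..<b} f" "(LBINT x:{..<b}. f x) = F b - L"
      by (simp_all add: interval_lebesgue_integral_def einterval_iff)
  qed
  have above_c: "set_integrable lborel {c<..<b} f" "(LBINT x:{c<..<b}. f x) = F b - F c"
    if "c < b" for b
  proof -
    have "\<And>x. ereal c < ereal x \<Longrightarrow> ereal x < ereal b \<Longrightarrow> (F has_real_derivative f x) (at x)"
         "\<And>x. ereal c < ereal x \<Longrightarrow> ereal x < ereal b \<Longrightarrow> isCont f x"
      by (auto intro!: F_deriv f_cont)
    from interval_integral_FTC_nonneg[OF _ this f_AE_nonneg F_right F_left] that
    show "set_integrable lborel {c<..<b} f" "(LBINT x:{c<..<b}. f x) = F b - F c"
      by (simp_all add: interval_lebesgue_integral_def einterval_iff)
  qed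
  show ?thesis
  proof (cases "u \<le> c")
    case True
    have "(LBINT x:{..u}. f x) = (LBINT x:{..<u}. f x)"
      by (rule set_integral_discrete_difference[where X="{u}"]) auto
    with below_c[OF True] show ?thesis
      by simp
  next
    case False
    have "(LBINT x:{..u}. f x) = (LBINT x:{..<c} \<union> {c<..<u}. f x)"
      by (rule set_integral_discrete_difference[where X="{c, u}"]) (use False in auto)
    also have "\<dots> = (LBINT x:{..<c}. f x) + (LBINT x:{c<..<u}. f x)"
      using below_c[of c] above_c[of u] False by (intro set_integral_Un) auto
    also have "\<dots> = F u - L"
      using below_c[of c] above_c[of u] False by simp
    finally show ?thesis .
  qed
qed

definition t_of_zeta :: "real \<Rightarrow> real" where
  "t_of_zeta z = (1 + sgn z * sqrt (1 - exp (- (z^2 / 2)))) / 2"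

lemma t_of_zeta_mult_one_minus: "t_of_zeta z * (1 - t_of_zeta z) = exp (- (z^2 / 2)) / 4"
proof -
  define e where "e = exp (- (z^2 / 2))"
  have "e \<le> 1"
    by (simp add: e_def)
  then have "sqrt (1 - e) ^ 2 = 1 - e"
    by simp
  moreover have "sgn z ^ 2 * (1 - e) = 1 - e"
    by (cases "z = 0") (simp_all add: e_def sgn_if)
  ultimately have "(1 + sgn z * sqrt (1 - e)) * (1 - sgn z * sqrt (1 - e)) = e"
    by (simp add: algebra_simps power2_eq_square)
  then show ?thesis
    by (simp add: t_of_zeta_def e_def[symmetric] field_simps)
qed

lemma phiB_eq:
  assumes "z \<noteq> 0"
  shows "phiB z = \<bar>z\<bar> / (sqrt 2 * sqrt (1 - exp (- (z^2 / 2))))"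
proof -
  have "(z^2 / 2) / (1 - exp (- (z^2 / 2))) = z^2 / (2 * (1 - exp (- (z^2 / 2))))"
    by simp
  then have "phiB z = sqrt (z^2) / sqrt (2 * (1 - exp (- (z^2 / 2))))"
    using assms by (simp only: phiB_def if_False real_sqrt_divide)
  then show ?thesis
    by (simp only: real_sqrt_abs real_sqrt_mult)
qed

lemma phiB_nonneg: "0 \<le> phiB z"
  by (simp add: phiB_def)

lemma isCont_phiB:
  assumes "z \<noteq> 0"
  shows "isCont phiB z"
proof -
  have "\<forall>\<^sub>F x in nhds z. phiB x = \<bar>x\<bar> / (sqrt 2 * sqrt (1 - exp (- (x^2 / 2))))"
    using t1_space_nhds[OF assms] by eventually_elim (simp add: phiB_eq)
  moreover have "isCont (\<lambda>x. \<bar>x\<bar> / (sqrt 2 * sqrt (1 - exp (- (x^2 / 2))))) z"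
    using assms by (intro continuous_intros) auto
  ultimately show ?thesis
    by (simp add: isCont_cong)
qed

lemma eventually_sgn_eq_nhds:
  fixes z :: real
  assumes "z \<noteq> 0"
  shows "\<forall>\<^sub>F x in nhds z. sgn x = sgn z"
proof (cases "z > 0")
  case True
  have "\<forall>\<^sub>F x in nhds z. x \<in> {0<..}"
    by (rule eventually_nhds_in_open) (use True in auto)
  then show ?thesis
    by eventually_elim (use True in auto)
next
  case False
  have "\<forall>\<^sub>F x in nhds z. x \<in> {..<0}"
    by (rule eventually_nhds_in_open) (use False assms in auto)
  then show ?thesis
    by eventually_elim (use False assms in auto)
qed

lemma t_of_zeta_has_real_derivative:
  assumes "z \<noteq> 0"
  shows "(t_of_zeta has_real_derivative exp (- (z^2 / 2)) * phiB z / (2 * sqrt 2)) (at z)"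
proof -
  define e where "e = exp (- (z^2 / 2))"
  define w where "w = sqrt (1 - e)"
  have "0 < 1 - e"
    using assms by (simp add: e_def)
  have "((\<lambda>x. 1 - exp (- (x^2 / 2))) has_real_derivative z * e) (at z)"
    unfolding e_def by (auto intro!: derivative_eq_intros)
  from DERIV_chain2[OF DERIV_real_sqrt[OF \<open>0 < 1 - e\<close>[unfolded e_def]] this]
  have "((\<lambda>x. sqrt (1 - exp (- (x^2 / 2)))) has_real_derivative inverse w / 2 * (z * e)) (at z)"
    by (simp only: w_def e_def)
  then have deriv: "((\<lambda>x. (1 + sgn z * sqrt (1 - exp (- (x^2 / 2)))) / 2) has_real_derivative
               (0 + sgn z * (inverse w / 2 * (z * e))) / 2) (at z)"
    by (intro DERIV_cdivide DERIV_add DERIV_const DERIV_cmult)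
  have ev: "\<forall>\<^sub>F x in nhds z. t_of_zeta x = (1 + sgn z * sqrt (1 - exp (- (x^2 / 2)))) / 2"
    using eventually_sgn_eq_nhds[OF assms] by eventually_elim (simp add: t_of_zeta_def)
  have "sgn z * z = \<bar>z\<bar>"
    by (cases "z > 0") (use assms in auto)
  have phi: "phiB z = \<bar>z\<bar> / (sqrt 2 * w)"
    using phiB_eq[OF assms] by (simp only: w_def e_def)
  have "(0 + sgn z * (inverse w / 2 * (z * e))) / 2 = (sgn z * z) * e / (4 * w)"
    by (simp only: add_0 divide_inverse inverse_mult_distrib mult_ac) simp
  also have "\<dots> = \<bar>z\<bar> * e / (2 * (sqrt 2 * sqrt 2) * w)"
    by (simp only: \<open>sgn z * z = \<bar>z\<bar>\<close>) simp
  also have "\<dots> = e * (\<bar>z\<bar> / (sqrt 2 * w)) / (2 * sqrt 2)"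
    by (simp only: times_divide_eq_right divide_divide_eq_left mult_ac)
  also have "\<dots> = e * phiB z / (2 * sqrt 2)"
    by (simp only: phi)
  finally have val: "(0 + sgn z * (inverse w / 2 * (z * e))) / 2 = e * phiB z / (2 * sqrt 2)" .
  show ?thesis
    unfolding e_def[symmetric] by (rule iffD2[OF DERIV_cong_ev[OF refl ev val[symmetric]] deriv])
qed

lemma isCont_t_of_zeta: "isCont t_of_zeta z"
proof (cases "z = 0")
  case False
  then show ?thesis
    using t_of_zeta_has_real_derivative DERIV_isCont by blast
next
  case True
  have "((\<lambda>x. sqrt (1 - exp (- (x^2 / 2)))) \<longlongrightarrow> sqrt (1 - exp (- (0^2 / 2)))) (at 0)"
    by (intro tendsto_intros) simp
  then have "((\<lambda>x. sqrt (1 - exp (- (x^2 / 2)))) \<longlongrightarrow> 0) (at 0)"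
    by simp
  then have "((\<lambda>x. sgn x * sqrt (1 - exp (- (x^2 / 2)))) \<longlongrightarrow> 0) (at 0)"
    by (rule Lim_null_comparison[rotated]) (simp add: abs_mult sgn_if)
  then have "((\<lambda>x. (1 + sgn x * sqrt (1 - exp (- (x^2 / 2)))) / 2) \<longlongrightarrow> (1 + 0) / 2) (at 0)"
    by (intro tendsto_divide tendsto_add tendsto_const) simp_all
  then show ?thesis
    using True by (simp add: isCont_def t_of_zeta_def[abs_def])
qed

lemma t_of_zeta_at_bot: "(t_of_zeta \<longlongrightarrow> 0) at_bot"
proof -
  have "((\<lambda>z. (1 - sqrt (1 - exp (- (z^2 / 2)))) / 2) \<longlongrightarrow> 0) at_bot"
    by real_asymp
  moreover have "\<forall>\<^sub>F z in at_bot. (1 - sqrt (1 - exp (- (z^2 / 2)))) / 2 = t_of_zeta z"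
    using eventually_le_at_bot[of "-1 :: real"] by eventually_elim (simp add: t_of_zeta_def)
  ultimately show ?thesis
    by (rule Lim_transform_eventually)
qed

lemma exp_etaB:
  assumes "0 < y" "y < 1"
  shows "exp (- (etaB y ^ 2 / 2)) = 4 * y * (1 - y)"
proof (cases "y = 1/2")
  case True
  then show ?thesis
    unfolding True etaB_def by simp
next
  case False
  have "0 < 4 * y * (1 - y)"
    using assms by simp
  moreover have "4 * y * (1 - y) \<le> 1"
  proof -
    have "0 \<le> (1 - 2 * y)^2"
      by simp
    then show ?thesis
      by (simp add: power2_eq_square algebra_simps)
  qed
  ultimately have "ln (4 * y * (1 - y)) \<le> 0"
    by simp
  moreover have "sgn (1/2 - y) ^ 2 = 1"
    using False by (simp add: sgn_if)
  ultimately have "etaB y ^ 2 = - 2 * ln (4 * y * (1 - y))"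
    by (simp add: etaB_def power_mult_distrib)
  then show ?thesis
    using \<open>0 < 4 * y * (1 - y)\<close> by simp
qed

lemma sgn_etaB:
  assumes "0 < y" "y < 1"
  shows "sgn (etaB y) = sgn (1/2 - y)"
proof (cases "y = 1/2")
  case True
  then show ?thesis
    unfolding True etaB_def by simp
next
  case False
  have "0 < 4 * y * (1 - y)"
    using assms by simp
  moreover have "4 * y * (1 - y) < 1"
  proof -
    have "0 < (1 - 2 * y)^2"
      using False by simp
    then show ?thesis
      by (simp add: power2_eq_square algebra_simps)
  qed
  ultimately have "0 < sqrt (- 2 * ln (4 * y * (1 - y)))"
    by simp
  then show ?thesis
    by (simp add: etaB_def sgn_mult)
qed

lemma t_of_zeta_etaB:
  assumes "0 < y" "y < 1"
  shows "t_of_zeta (etaB y) = 1 - y"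
proof -
  have "1 - 4 * y * (1 - y) = (1 - 2 * y)^2"
    by (simp add: power2_eq_square algebra_simps)
  then have "sqrt (1 - exp (- (etaB y ^ 2 / 2))) = \<bar>1 - 2 * y\<bar>"
    using assms by (simp add: exp_etaB)
  moreover have "sgn (1/2 - y) * \<bar>1 - 2 * y\<bar> = 1 - 2 * y"
    by (simp add: sgn_if)
  ultimately show ?thesis
    using assms by (simp add: t_of_zeta_def sgn_etaB)
qed

lemma set_integral_atMost_exp_phiB:
  assumes "N \<ge> 1"
  shows "(LBINT z:{..u}. exp (- (1/2) * real N * z^2) * phiB z) =
           4 ^ N / sqrt 2 * (LBINT t=0..t_of_zeta u. t ^ (N - 1) * (1 - t) ^ (N - 1))"
proof -
  define B where "B = (\<lambda>s::real. LBINT t=0..s. t ^ (N - 1) * (1 - t) ^ (N - 1))"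
  define F where "F = (\<lambda>z. 4 ^ N / sqrt 2 * B (t_of_zeta z))"
  have B_deriv: "(B has_real_derivative s ^ (N - 1) * (1 - s) ^ (N - 1)) (at s)" for s
    using interval_integral_has_real_derivative[of "\<lambda>t. t ^ (N - 1) * (1 - t) ^ (N - 1)" 0 s]
    by (simp add: B_def zero_ereal_def continuous_intros)
  have "(LBINT z:{..u}. exp (- (1/2) * real N * z^2) * phiB z) = F u - 0"
  proof (rule set_integral_atMost_FTC)
    show "isCont F z" for z
      unfolding F_def
      by (intro continuous_intros isCont_o2[OF isCont_t_of_zeta DERIV_isCont[OF B_deriv]])
    have "((\<lambda>z. B (t_of_zeta z)) \<longlongrightarrow> B 0) at_bot"
      by (rule isCont_tendsto_compose[OF DERIV_isCont[OF B_deriv] t_of_zeta_at_bot])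
    moreover have "B 0 = 0"
      by (simp add: B_def zero_ereal_def)
    ultimately show "(F \<longlongrightarrow> 0) at_bot"
      unfolding F_def using tendsto_mult_left[of _ 0 at_bot "4 ^ N / sqrt 2"] by simp
    show "(F has_real_derivative exp (- (1/2) * real N * z^2) * phiB z) (at z)" if "z \<noteq> 0" for z
    proof -
      define e where "e = exp (- (z^2 / 2))"
      define P where "P = t_of_zeta z ^ (N - 1) * (1 - t_of_zeta z) ^ (N - 1)"
      have deriv: "(F has_real_derivative 4 ^ N / sqrt 2 * (P * (e * phiB z / (2 * sqrt 2)))) (at z)"
        unfolding F_def P_def e_def
        by (intro DERIV_cmult DERIV_chain2[OF B_deriv t_of_zeta_has_real_derivative[OF that]])
      have "P = (e / 4) ^ (N - 1)"
        by (simp add: P_def e_def t_of_zeta_mult_one_minus power_mult_distrib[symmetric])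
      have "4 ^ N / sqrt 2 * (P * (e * phiB z / (2 * sqrt 2))) =
              4 ^ N / (2 * (sqrt 2 * sqrt 2)) * (P * e * phiB z)"
        by (simp only: times_divide_eq_right times_divide_eq_left divide_divide_eq_left mult_ac)
      also have "\<dots> = 4 ^ N / 4 * ((e / 4) ^ (N - 1) * e * phiB z)"
        by (simp add: \<open>P = (e / 4) ^ (N - 1)\<close>)
      also have "\<dots> = e ^ N * phiB z"
        using assms by (cases N) (simp_all add: power_divide)
      also have "\<dots> = exp (- (1/2) * real N * z^2) * phiB z"
        unfolding e_def exp_of_nat_mult[symmetric] by (simp add: algebra_simps)
      finally have val: "4 ^ N / sqrt 2 * (P * (e * phiB z / (2 * sqrt 2))) =
                           exp (- (1/2) * real N * z^2) * phiB z" .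
      show ?thesis
        using deriv unfolding val .
    qed
    show "isCont (\<lambda>z. exp (- (1/2) * real N * z^2) * phiB z) z" if "z \<noteq> 0" for z
      using isCont_phiB[OF that] by (intro continuous_intros)
    show "0 \<le> exp (- (1/2) * real N * z^2) * phiB z" for z
      by (simp add: phiB_nonneg)
  qed
  then show ?thesis
    by (simp add: F_def B_def)
qed

lemma inverse_Beta_diag_eq_PhiB:
  assumes "N \<ge> 1"
  shows "1 / Beta (real N) (real N) = sqrt (real N / (2 * pi)) * PhiB N * (4 ^ N / sqrt 2)"
proof -
  have "sqrt (real N / (2 * pi)) * PhiB N * (4 ^ N / sqrt 2) =
          4 ^ N * Gamma (real N + 1/2) / (2 * sqrt pi * Gamma (real N))"
    using assms by (simp add: PhiB_def real_sqrt_divide real_sqrt_mult field_simps)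
  also have "\<dots> = 1 / Beta (real N) (real N)"
    using assms inverse_Beta_diag[of "real N"] by (simp add: powr_realpow)
  finally show ?thesis ..
qed

theorem mainTheorem3:
  fixes N :: nat and y :: real
  assumes "N \<ge> 1" and "0 < y" and "y < 1"
  shows "inc_beta_reg (1 - y) (real N) (real N) =
           sqrt (real N / (2 * pi)) * PhiB N *
           (LBINT z:{..etaB y}. exp (- (1/2) * real N * z^2) * phiB z)"
proof -
  let ?I = "LBINT t=0..1 - y. t ^ (N - 1) * (1 - t) ^ (N - 1)"
  have "inc_beta_reg (1 - y) (real N) (real N) = ?I * (1 / Beta (real N) (real N))"
    using assms inc_beta_reg_of_nat[of N N "1 - y"] by simp
  also have "\<dots> = sqrt (real N / (2 * pi)) * PhiB N * (4 ^ N / sqrt 2 * ?I)"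
    using inverse_Beta_diag_eq_PhiB[OF assms(1)] by simp
  also have "4 ^ N / sqrt 2 * ?I = (LBINT z:{..etaB y}. exp (- (1/2) * real N * z^2) * phiB z)"
    using set_integral_atMost_exp_phiB[OF assms(1)] t_of_zeta_etaB[OF assms(2,3)] by simp
  finally show ?thesis .
qed

end
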